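(* Let $P$ be an NL poset on $X_n$ with twin classes $\alpha_1,\ldots,\alpha_r$ and twin poset $P_\equiv$. For $\varphi\in\mathrm{Aut}(P)$ and a twin class $\alpha$, set $\pi(\varphi)(\alpha)=\varphi(\alpha)=\{\varphi(x):x\in\alpha\}$. Then $\pi$ is a well-defined group homomorphism $\mathrm{Aut}(P)\to\mathrm{Aut}(P_\equiv)$, and its kernel (the automorphisms mapping each $\alpha_i$ onto itself) consists exactly of all bijections of $X_n$ that restrict to a permutation of each $\alpha_i$, so that $\ker(\pi)\cong\prod_{i=1}^r\mathfrak S_{|\alpha_i|}$. In particular, $\pi$ is surjective onto $\mathrm{Aut}(P_\equiv)$ if and only if every $\psi\in\mathrm{Aut}(P_\equiv)$ preserves twin-class sizes, i.e., $|\psi(\alpha)|=|\alpha|$ for all twin classes $\alpha$.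
   Context: Let $X_n=\{0,1,\ldots,n-1\}$. A naturally labeled (NL) poset on $X_n$ is a partial order $\preceq$ on $X_n$ such that $x\preceq y$ implies $x\le y$ in the usual integer order. $\mathrm{Aut}(P)$ is the group of bijections $\sigma$ of $X_n$ with $x\preceq y\iff\sigma(x)\preceq\sigma(y)$. For $x\in X_n$, $D(x)=\{z: z\prec x\}$, $U(x)=\{z: x\prec z\}$; $x,y$ are twins if $D(x)=D(y)$ and $U(x)=U(y)$, and the equivalence classes are the twin classes. The twin poset $P_\equiv$ is the set of twin classes ordered by $\alpha\preceq_\equiv\beta$ iff $x\preceq y$ for (any) $x\in\alpha$, $y\in\beta$. $\mathfrak S_k$ is the symmetric group on $k$ letters. *)

theory Defs
  imports "HOL-Algebra.Algebra"
begin

definition Xset :: "nat \<Rightarrow> nat set" where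
  "Xset n = {..<n}"

definition nl_poset :: "nat \<Rightarrow> (nat \<Rightarrow> nat \<Rightarrow> bool) \<Rightarrow> bool" where
  "nl_poset n leq \<longleftrightarrow>
     (\<forall>x y. leq x y \<longrightarrow> x \<in> Xset n \<and> y \<in> Xset n) \<and>
     (\<forall>x\<in>Xset n. leq x x) \<and>
     (\<forall>x y. leq x y \<longrightarrow> leq y x \<longrightarrow> x = y) \<and>
     (\<forall>x y z. leq x y \<longrightarrow> leq y z \<longrightarrow> leq x z) \<and>
     (\<forall>x y. leq x y \<longrightarrow> x \<le> y)"

definition down_set :: "nat \<Rightarrow> (nat \<Rightarrow> nat \<Rightarrow> bool) \<Rightarrow> nat \<Rightarrow> nat set" where
  "down_set n leq x = {z \<in> Xset n. leq z x \<and> z \<noteq> x}"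

definition up_set :: "nat \<Rightarrow> (nat \<Rightarrow> nat \<Rightarrow> bool) \<Rightarrow> nat \<Rightarrow> nat set" where
  "up_set n leq x = {z \<in> Xset n. leq x z \<and> x \<noteq> z}"

definition twins :: "nat \<Rightarrow> (nat \<Rightarrow> nat \<Rightarrow> bool) \<Rightarrow> nat \<Rightarrow> nat \<Rightarrow> bool" where
  "twins n leq x y \<longleftrightarrow> down_set n leq x = down_set n leq y \<and> up_set n leq x = up_set n leq y"

definition twin_classes :: "nat \<Rightarrow> (nat \<Rightarrow> nat \<Rightarrow> bool) \<Rightarrow> nat set set" where
  "twin_classes n leq = (\<lambda>x. {y \<in> Xset n. twins n leq x y}) ` Xset n"

text \<open>Order of the twin poset: alpha <= beta iff x <= y for some (equivalently any)
  x in alpha, y in beta.\<close>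
definition twin_le :: "(nat \<Rightarrow> nat \<Rightarrow> bool) \<Rightarrow> nat set \<Rightarrow> nat set \<Rightarrow> bool" where
  "twin_le leq \<alpha> \<beta> \<longleftrightarrow> (\<exists>x\<in>\<alpha>. \<exists>y\<in>\<beta>. leq x y)"

definition aut_group :: "'a set \<Rightarrow> ('a \<Rightarrow> 'a \<Rightarrow> bool) \<Rightarrow> ('a \<Rightarrow> 'a) monoid" where
  "aut_group S R = (BijGroup S)
     \<lparr>carrier := {\<sigma> \<in> Bij S. \<forall>x\<in>S. \<forall>y\<in>S. R x y \<longleftrightarrow> R (\<sigma> x) (\<sigma> y)}\<rparr>"

definition AutP :: "nat \<Rightarrow> (nat \<Rightarrow> nat \<Rightarrow> bool) \<Rightarrow> (nat \<Rightarrow> nat) monoid" where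
  "AutP n leq = aut_group (Xset n) leq"

definition AutTwin :: "nat \<Rightarrow> (nat \<Rightarrow> nat \<Rightarrow> bool) \<Rightarrow> (nat set \<Rightarrow> nat set) monoid" where
  "AutTwin n leq = aut_group (twin_classes n leq) (twin_le leq)"

definition twin_pi :: "nat \<Rightarrow> (nat \<Rightarrow> nat \<Rightarrow> bool) \<Rightarrow> (nat \<Rightarrow> nat) \<Rightarrow> (nat set \<Rightarrow> nat set)" where
  "twin_pi n leq \<phi> = (\<lambda>\<alpha> \<in> twin_classes n leq. \<phi> ` \<alpha>)"

end

theory Submission
  imports Defs "HOL-Combinatorics.Permutations" "HOL-Library.Disjoint_Sets"
begin

(* Two twins are comparable only if they are equal, and whether x <= y for x, y in distinct
   twin classes depends only on the classes.  So an automorphism of P, which preserves down- and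
   up-sets and hence the twin relation, induces an automorphism of the twin poset; conversely a
   bijection of X_n that maps every class alpha onto psi(alpha) for some psi in Aut(P_equiv) is an
   automorphism of P.  Taking psi = id identifies the kernel with the bijections that fix every
   class, i.e. with the product of the symmetric groups of the classes, and a given psi is hit
   exactly when bijections alpha -> psi(alpha) exist for all classes, i.e. when psi preserves
   class sizes. *)

definition glue_blocks :: "'a set set \<Rightarrow> ('a set \<Rightarrow> 'a \<Rightarrow> 'b) \<Rightarrow> 'a \<Rightarrow> 'b" where
  "glue_blocks P f = (\<lambda>x\<in>\<Union>P. f (THE B. B \<in> P \<and> x \<in> B) x)"

lemma glue_blocks_apply:
  assumes "disjoint P" "B \<in> P" "x \<in> B"
  shows "glue_blocks P f x = f B x"
proof -
  have "(THE B. B \<in> P \<and> x \<in> B) = B"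
    using assms disjointD by (intro the_equality) fastforce+
  then show ?thesis
    using assms unfolding glue_blocks_def by auto
qed

lemma bij_betw_blockwise:
  assumes "partition_on A P" "bij_betw g P P" "\<And>B. B \<in> P \<Longrightarrow> bij_betw f B (g B)"
  shows "bij_betw f A A"
proof -
  have "disjoint_family_on g P"
    using assms(1,2) unfolding disjoint_family_on_def partition_on_def bij_betw_def
    by (metis disjointD inj_on_contraD image_eqI)
  then have "bij_betw f (\<Union>B\<in>P. B) (\<Union>B\<in>P. g B)"
    using assms(3) by (rule bij_betw_UNION_disjoint)
  moreover have "(\<Union>B\<in>P. g B) = \<Union>P"
    using bij_betw_imp_surj_on[OF assms(2)] by simp
  ultimately show ?thesis
    using partition_onD1[OF assms(1)] by simp
qed

lemma glue_blocks_bij_betw: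
  assumes "disjoint P" "B \<in> P" "bij_betw (f B) B C"
  shows "bij_betw (glue_blocks P f) B C"
proof -
  have "bij_betw (glue_blocks P f) B C \<longleftrightarrow> bij_betw (f B) B C"
    by (rule bij_betw_cong) (simp add: glue_blocks_apply[OF assms(1,2)])
  then show ?thesis using assms(3) by simp
qed

lemma glue_blocks_in_Bij:
  assumes "partition_on A P" "bij_betw g P P" "\<And>B. B \<in> P \<Longrightarrow> bij_betw (f B) B (g B)"
  shows "glue_blocks P f \<in> Bij A"
proof -
  have "bij_betw (glue_blocks P f) B (g B)" if "B \<in> P" for B
    using glue_blocks_bij_betw[where f = f, OF partition_onD2[OF assms(1)] that assms(3)[OF that]] .
  then have "bij_betw (glue_blocks P f) A A"
    by (rule bij_betw_blockwise[OF assms(1,2)])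
  moreover have "glue_blocks P f \<in> extensional A"
    using partition_onD1[OF assms(1)] by (simp add: glue_blocks_def)
  ultimately show ?thesis by (simp add: Bij_def)
qed

definition restrict_blocks :: "'a set set \<Rightarrow> ('a \<Rightarrow> 'b) \<Rightarrow> 'a set \<Rightarrow> 'a \<Rightarrow> 'b" where
  "restrict_blocks P \<sigma> = (\<lambda>B\<in>P. restrict \<sigma> B)"

lemma inj_on_restrict_blocks: "inj_on (restrict_blocks P) (extensional (\<Union>P))"
proof (rule inj_onI)
  fix \<sigma> \<tau> :: "'a \<Rightarrow> 'b" assume ext: "\<sigma> \<in> extensional (\<Union>P)" "\<tau> \<in> extensional (\<Union>P)"
    and eq: "restrict_blocks P \<sigma> = restrict_blocks P \<tau>"
  have "\<sigma> x = \<tau> x" if "B \<in> P" "x \<in> B" for B x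
  proof -
    have "restrict_blocks P \<sigma> B x = restrict_blocks P \<tau> B x"
      using eq by simp
    then show ?thesis
      using that by (simp add: restrict_blocks_def)
  qed
  then show "\<sigma> = \<tau>"
    using ext by (intro extensionalityI[of \<sigma> "\<Union>P"]) auto
qed

lemma restrict_blocks_glue_blocks:
  assumes "disjoint P" "f \<in> (\<Pi>\<^sub>E B\<in>P. extensional B)"
  shows "restrict_blocks P (glue_blocks P f) = f"
proof (rule extensionalityI[of _ P])
  fix B assume B: "B \<in> P"
  have "restrict (glue_blocks P f) B = f B"
    using PiE_mem[OF assms(2) B] glue_blocks_apply[OF assms(1) B, of _ f]
    by (intro extensionalityI[of _ B]) simp_all
  then show "restrict_blocks P (glue_blocks P f) B = f B"
    using B by (simp add: restrict_blocks_def)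
qed (use assms(2) in \<open>auto simp: restrict_blocks_def PiE_iff\<close>)

lemma restrict_blocks_compose:
  assumes "\<Union>P \<subseteq> A" "\<forall>B\<in>P. bij_betw \<tau> B B"
  shows "restrict_blocks P (compose A \<sigma> \<tau>) = (\<lambda>B\<in>P. compose B (restrict \<sigma> B) (restrict \<tau> B))"
  unfolding restrict_blocks_def
proof (rule restrict_ext)
  fix B assume B: "B \<in> P"
  show "restrict (compose A \<sigma> \<tau>) B = compose B (restrict \<sigma> B) (restrict \<tau> B)"
    using assms B bij_betw_apply unfolding compose_def by (intro restrict_ext) fastforce
qed

lemma carrier_BijGroup [simp]: "carrier (BijGroup S) = Bij S"
  by (simp add: BijGroup_def)

lemma mult_BijGroup: "\<sigma> \<in> Bij S \<Longrightarrow> \<tau> \<in> Bij S \<Longrightarrow> \<sigma> \<otimes>\<^bsub>BijGroup S\<^esub> \<tau> = compose S \<sigma> \<tau>"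
  by (simp add: BijGroup_def)

lemma restrict_in_Bij: "bij_betw \<sigma> S S \<Longrightarrow> restrict \<sigma> S \<in> Bij S"
  by (simp add: Bij_def cong: bij_betw_cong)

lemma bij_betw_restrict_permutes_Bij: "bij_betw (\<lambda>p. restrict p S) {p. p permutes S} (Bij S)"
proof (rule bij_betw_byWitness[where f' = "\<lambda>\<sigma>. restrict_id \<sigma> S"])
  show "\<forall>p\<in>{p. p permutes S}. restrict_id (restrict p S) S = p"
    by (auto simp: fun_eq_iff restrict_id_def permutes_not_in)
  show "\<forall>\<sigma>\<in>Bij S. restrict (restrict_id \<sigma> S) S = \<sigma>"
    by (auto simp: fun_eq_iff Bij_def extensional_def)
  show "(\<lambda>p. restrict p S) ` {p. p permutes S} \<subseteq> Bij S"
    by (auto simp: Bij_def permutes_imp_bij cong: bij_betw_cong)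
  show "(\<lambda>\<sigma>. restrict_id \<sigma> S) ` Bij S \<subseteq> {p. p permutes S}"
    by (auto simp: Bij_def intro: permutes_restrict_id)
qed

lemma sym_group_iso_BijGroup:
  assumes "finite S"
  shows "sym_group (card S) \<cong> BijGroup S"
proof -
  define I where "I = {1..card S}"
  obtain e where e: "bij_betw e I S"
    using ex_bij_betw_nat_finite_1[OF assms] unfolding I_def by blast
  define h where "h = (\<lambda>p. restrict p S) \<circ> map_permutation I e"
  have "map_permutation I e = (\<lambda>p x. if x \<in> S then e (p (inv_into I e x)) else x)"
    using bij_betw_imp_surj_on[OF e] by (simp add: fun_eq_iff map_permutation_def restrict_id_def)
  then have "bij_betw (map_permutation I e) {p. p permutes I} {p. p permutes S}"
    using bij_betw_permutations[OF e] by simp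
  then have h_bij: "bij_betw h {p. p permutes I} (Bij S)"
    unfolding h_def by (rule bij_betw_trans[OF _ bij_betw_restrict_permutes_Bij])
  then have h_in: "h p \<in> Bij S" if "p permutes I" for p
    using that by (auto dest: bij_betw_apply)
  have "h \<in> hom (sym_group (card S)) (BijGroup S)"
  proof (rule homI)
    fix p assume "p \<in> carrier (sym_group (card S))"
    then show "h p \<in> carrier (BijGroup S)"
      using h_in by (simp add: sym_group_carrier I_def)
  next
    fix p q assume "p \<in> carrier (sym_group (card S))" "q \<in> carrier (sym_group (card S))"
    then have pq: "p permutes I" "q permutes I"
      by (simp_all add: sym_group_carrier I_def)
    have "h (p \<circ> q) = compose S (h p) (h q)"
      using map_permutation_compose'[OF bij_betw_imp_inj_on[OF e] pq(2)]
        permutes_in_image[OF map_permutation_permutes[OF e pq(2)]]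
      by (auto simp: h_def compose_def fun_eq_iff)
    then show "h (p \<otimes>\<^bsub>sym_group (card S)\<^esub> q) = h p \<otimes>\<^bsub>BijGroup S\<^esub> h q"
      using h_in pq by (simp add: sym_group_mult mult_BijGroup)
  qed
  moreover have "bij_betw h (carrier (sym_group (card S))) (carrier (BijGroup S))"
    using h_bij by (simp add: sym_group_def I_def)
  ultimately show ?thesis
    unfolding is_iso_def iso_def by blast
qed

lemma block_stabilizer_iso_product_group:
  assumes P: "partition_on A P"
  shows "(BijGroup A)\<lparr>carrier := {\<sigma> \<in> Bij A. \<forall>B\<in>P. bij_betw \<sigma> B B}\<rparr>
           \<cong> product_group P BijGroup"
proof -
  let ?K = "{\<sigma> \<in> Bij A. \<forall>B\<in>P. bij_betw \<sigma> B B}"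
  let ?G = "(BijGroup A)\<lparr>carrier := ?K\<rparr>"
  have A: "\<Union>P = A"
    using partition_onD1[OF P] by simp
  have restrict_in: "restrict_blocks P \<sigma> \<in> (\<Pi>\<^sub>E B\<in>P. Bij B)" if "\<sigma> \<in> ?K" for \<sigma>
    using that by (simp add: restrict_blocks_def restrict_in_Bij)
  have hom: "restrict_blocks P \<in> hom ?G (product_group P BijGroup)"
  proof (rule homI)
    fix \<sigma> \<tau> assume "\<sigma> \<in> carrier ?G" "\<tau> \<in> carrier ?G"
    then have \<sigma>\<tau>: "\<sigma> \<in> ?K" "\<tau> \<in> ?K" by simp_all
    then have "restrict_blocks P (compose A \<sigma> \<tau>) =
        (\<lambda>B\<in>P. restrict \<sigma> B \<otimes>\<^bsub>BijGroup B\<^esub> restrict \<tau> B)"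
      using A by (simp add: restrict_blocks_compose mult_BijGroup restrict_in_Bij cong: restrict_cong)
    moreover have "restrict_blocks P \<sigma> \<otimes>\<^bsub>product_group P BijGroup\<^esub> restrict_blocks P \<tau> =
        (\<lambda>B\<in>P. restrict \<sigma> B \<otimes>\<^bsub>BijGroup B\<^esub> restrict \<tau> B)"
      by (simp add: restrict_blocks_def cong: restrict_cong)
    ultimately show "restrict_blocks P (\<sigma> \<otimes>\<^bsub>?G\<^esub> \<tau>) =
        restrict_blocks P \<sigma> \<otimes>\<^bsub>product_group P BijGroup\<^esub> restrict_blocks P \<tau>"
      using \<sigma>\<tau> by (simp add: mult_BijGroup)
  qed (use restrict_in in simp)
  have "inj_on (restrict_blocks P) ?K"
    using A by (intro inj_on_subset[OF inj_on_restrict_blocks]) (auto simp: Bij_imp_extensional)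
  moreover have "restrict_blocks P ` ?K = (\<Pi>\<^sub>E B\<in>P. Bij B)"
  proof (intro equalityI subsetI)
    fix f assume f: "f \<in> (\<Pi>\<^sub>E B\<in>P. Bij B)"
    then have fB: "bij_betw (f B) B B" if "B \<in> P" for B
      using that by (auto simp: Bij_def)
    have "glue_blocks P f \<in> Bij A"
      using fB by (intro glue_blocks_in_Bij[OF P bij_betw_id]) simp
    moreover have "bij_betw (glue_blocks P f) B B" if "B \<in> P" for B
      using glue_blocks_bij_betw[where f = f, OF partition_onD2[OF P] that fB[OF that]] .
    ultimately have glue_in: "glue_blocks P f \<in> ?K"
      by simp
    have "restrict_blocks P (glue_blocks P f) = f"
      using f by (intro restrict_blocks_glue_blocks[OF partition_onD2[OF P]]) (auto simp: Bij_def)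
    then show "f \<in> restrict_blocks P ` ?K"
      by (rule image_eqI[OF sym glue_in])
  qed (use restrict_in in blast)
  ultimately have "bij_betw (restrict_blocks P) (carrier ?G) (carrier (product_group P BijGroup))"
    by (simp add: bij_betw_def)
  then show ?thesis
    using hom unfolding is_iso_def iso_def by blast
qed

lemma image_equiv_class:
  assumes "equiv A R" "bij_betw \<phi> A A" "x \<in> A"
    and "\<And>x y. x \<in> A \<Longrightarrow> y \<in> A \<Longrightarrow> (\<phi> x, \<phi> y) \<in> R \<longleftrightarrow> (x, y) \<in> R"
  shows "\<phi> ` (R``{x}) = R``{\<phi> x}"
proof (intro equalityI subsetI)
  have in_A: "y \<in> A" if "(z, y) \<in> R" for z y
    using assms(1) that by (auto simp: equiv_def refl_on_def)
  fix w
  show "w \<in> R``{\<phi> x}" if "w \<in> \<phi> ` (R``{x})"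
    using that in_A assms(3,4) by auto
  show "w \<in> \<phi> ` (R``{x})" if w: "w \<in> R``{\<phi> x}"
  proof -
    obtain z where "z \<in> A" "w = \<phi> z"
      using w in_A bij_betw_imp_surj_on[OF assms(2)] by blast
    then show ?thesis
      using w assms(3,4) by auto
  qed
qed

lemma bij_betw_image_quotient:
  assumes "equiv A R" "bij_betw \<phi> A A"
    and "\<And>x y. x \<in> A \<Longrightarrow> y \<in> A \<Longrightarrow> (\<phi> x, \<phi> y) \<in> R \<longleftrightarrow> (x, y) \<in> R"
  shows "bij_betw ((`) \<phi>) (A//R) (A//R)"
proof -
  have "inj_on ((`) \<phi>) (A//R)"
    using bij_betw_imp_inj_on[OF assms(2)] in_quotient_imp_subset[OF assms(1)]
    by (auto intro!: inj_onI simp: inj_on_image_eq_iff)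
  moreover have "(`) \<phi> ` (A//R) = A//R"
  proof -
    have quotient_image: "A//R = (\<lambda>x. R``{x}) ` A"
      by (auto simp: quotient_def)
    have "(`) \<phi> ` (A//R) = (\<lambda>x. \<phi> ` (R``{x})) ` A"
      unfolding quotient_image image_image ..
    also have "\<dots> = (\<lambda>x. R``{\<phi> x}) ` A"
      using image_equiv_class[OF assms(1,2) _ assms(3)] by (rule image_cong[OF refl])
    also have "\<dots> = (\<lambda>y. R``{y}) ` (\<phi> ` A)"
      by (simp add: image_image)
    finally show ?thesis
      using bij_betw_imp_surj_on[OF assms(2)] quotient_image by simp
  qed
  ultimately show ?thesis by (simp add: bij_betw_def)
qed

lemma carrier_aut_group:
  "carrier (aut_group S R) = {\<sigma> \<in> Bij S. \<forall>x\<in>S. \<forall>y\<in>S. R x y \<longleftrightarrow> R (\<sigma> x) (\<sigma> y)}"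
  by (simp add: aut_group_def BijGroup_def)

lemma mult_aut_group:
  "\<sigma> \<in> Bij S \<Longrightarrow> \<tau> \<in> Bij S \<Longrightarrow> \<sigma> \<otimes>\<^bsub>aut_group S R\<^esub> \<tau> = compose S \<sigma> \<tau>"
  by (simp add: aut_group_def BijGroup_def)

lemma one_aut_group: "\<one>\<^bsub>aut_group S R\<^esub> = (\<lambda>x\<in>S. x)"
  by (simp add: aut_group_def BijGroup_def)

lemma image_Collect_bij_betw:
  assumes "bij_betw \<phi> A A"
  shows "\<phi> ` {z \<in> A. Q (\<phi> z)} = {w \<in> A. Q w}"
  using assms by (auto simp: bij_betw_def)

locale refl_relation_on_Xset =
  fixes n :: nat and leq :: "nat \<Rightarrow> nat \<Rightarrow> bool"
  assumes leq_in_Xset: "leq x y \<Longrightarrow> x \<in> Xset n \<and> y \<in> Xset n"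
    and leq_refl: "x \<in> Xset n \<Longrightarrow> leq x x"
begin

definition twin_rel :: "nat rel" where
  "twin_rel = {(x, y). x \<in> Xset n \<and> y \<in> Xset n \<and> twins n leq x y}"

lemma equiv_twin_rel: "equiv (Xset n) twin_rel"
  by (auto simp: equiv_def refl_on_def sym_def trans_def twin_rel_def twins_def)

lemma twin_classes_eq_quotient: "twin_classes n leq = Xset n // twin_rel"
  by (auto simp: twin_classes_def quotient_def twin_rel_def)

lemma partition_on_twin_classes: "partition_on (Xset n) (twin_classes n leq)"
  unfolding twin_classes_eq_quotient by (rule partition_on_quotient[OF equiv_twin_rel])

lemma twin_class_subset: "\<alpha> \<in> twin_classes n leq \<Longrightarrow> \<alpha> \<subseteq> Xset n"
  unfolding twin_classes_eq_quotient by (rule in_quotient_imp_subset[OF equiv_twin_rel])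

lemma finite_twin_class: "\<alpha> \<in> twin_classes n leq \<Longrightarrow> finite \<alpha>"
  using twin_class_subset finite_subset by (auto simp: Xset_def)

lemma same_twin_class_iff:
  assumes "\<alpha> \<in> twin_classes n leq" "\<beta> \<in> twin_classes n leq" "x \<in> \<alpha>" "y \<in> \<beta>"
  shows "\<alpha> = \<beta> \<longleftrightarrow> twins n leq x y"
  using quotient_eq_iff[OF equiv_twin_rel, of \<alpha> \<beta> x y] assms twin_class_subset
  by (auto simp: twin_classes_eq_quotient twin_rel_def)

lemma twins_leq_imp_eq:
  assumes "twins n leq x y" "leq x y"
  shows "x = y"
proof (rule ccontr)
  assume "x \<noteq> y"
  then have "x \<in> down_set n leq y"
    using assms(2) leq_in_Xset by (auto simp: down_set_def)
  then have "x \<in> down_set n leq x"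
    using assms(1) by (simp add: twins_def)
  then show False
    by (simp add: down_set_def)
qed

lemma leq_twins_transfer:
  assumes "twins n leq x x'" "twins n leq y y'" "x \<noteq> y" "leq x y"
  shows "leq x' y'"
proof -
  have "y \<in> up_set n leq x"
    using assms(3,4) leq_in_Xset by (auto simp: up_set_def)
  then have "leq x' y" "x' \<noteq> y"
    using assms(1) by (auto simp: twins_def up_set_def)
  then have "x' \<in> down_set n leq y"
    using leq_in_Xset by (auto simp: down_set_def)
  then show ?thesis
    using assms(2) by (auto simp: twins_def down_set_def)
qed

lemma leq_iff_twin_le:
  assumes "\<alpha> \<in> twin_classes n leq" "\<beta> \<in> twin_classes n leq" "x \<in> \<alpha>" "y \<in> \<beta>"
  shows "leq x y \<longleftrightarrow> (if \<alpha> = \<beta> then x = y else twin_le leq \<alpha> \<beta>)"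
proof (cases "\<alpha> = \<beta>")
  case True
  have "x \<in> Xset n"
    using assms(1,3) twin_class_subset by blast
  moreover have "twins n leq x y"
    using same_twin_class_iff[OF assms] True by simp
  ultimately show ?thesis
    using True twins_leq_imp_eq leq_refl by auto
next
  case False
  have "leq x y" if "twin_le leq \<alpha> \<beta>"
  proof -
    obtain x' y' where "x' \<in> \<alpha>" "y' \<in> \<beta>" "leq x' y'"
      using \<open>twin_le leq \<alpha> \<beta>\<close> by (auto simp: twin_le_def)
    moreover have "x' \<noteq> y'"
      using False partition_onD2[OF partition_on_twin_classes] assms(1,2) calculation(1,2)
      by (auto dest: disjointD)
    ultimately show "leq x y"
      using same_twin_class_iff[OF assms(1,1)] same_twin_class_iff[OF assms(2,2)] assms(3,4)
        leq_twins_transfer by blast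
  qed
  then show ?thesis
    using False assms(3,4) by (auto simp: twin_le_def)
qed


lemma carrier_AutP:
  "carrier (AutP n leq) =
     {\<phi> \<in> Bij (Xset n). \<forall>x\<in>Xset n. \<forall>y\<in>Xset n. leq x y \<longleftrightarrow> leq (\<phi> x) (\<phi> y)}"
  by (simp add: AutP_def carrier_aut_group)

lemma carrier_AutTwin:
  "carrier (AutTwin n leq) =
     {\<psi> \<in> Bij (twin_classes n leq). \<forall>\<alpha>\<in>twin_classes n leq. \<forall>\<beta>\<in>twin_classes n leq.
        twin_le leq \<alpha> \<beta> \<longleftrightarrow> twin_le leq (\<psi> \<alpha>) (\<psi> \<beta>)}"
  by (simp add: AutTwin_def carrier_aut_group)

lemma down_set_image:
  assumes "\<phi> \<in> carrier (AutP n leq)" "x \<in> Xset n"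
  shows "down_set n leq (\<phi> x) = \<phi> ` down_set n leq x"
proof -
  have bij: "bij_betw \<phi> (Xset n) (Xset n)"
    using assms(1) by (simp add: carrier_AutP Bij_def)
  have "down_set n leq x = {z \<in> Xset n. leq (\<phi> z) (\<phi> x) \<and> \<phi> z \<noteq> \<phi> x}"
    using assms bij_betw_imp_inj_on[OF bij]
    by (auto simp: down_set_def carrier_AutP dest: inj_onD)
  then show ?thesis
    using image_Collect_bij_betw[OF bij, of "\<lambda>w. leq w (\<phi> x) \<and> w \<noteq> \<phi> x"]
    by (simp add: down_set_def)
qed

lemma up_set_image:
  assumes "\<phi> \<in> carrier (AutP n leq)" "x \<in> Xset n"
  shows "up_set n leq (\<phi> x) = \<phi> ` up_set n leq x"
proof -
  have bij: "bij_betw \<phi> (Xset n) (Xset n)"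
    using assms(1) by (simp add: carrier_AutP Bij_def)
  have "up_set n leq x = {z \<in> Xset n. leq (\<phi> x) (\<phi> z) \<and> \<phi> x \<noteq> \<phi> z}"
    using assms bij_betw_imp_inj_on[OF bij]
    by (auto simp: up_set_def carrier_AutP dest: inj_onD)
  then show ?thesis
    using image_Collect_bij_betw[OF bij, of "\<lambda>w. leq (\<phi> x) w \<and> \<phi> x \<noteq> w"]
    by (simp add: up_set_def)
qed

lemma twins_image_iff:
  assumes "\<phi> \<in> carrier (AutP n leq)" "x \<in> Xset n" "y \<in> Xset n"
  shows "twins n leq (\<phi> x) (\<phi> y) \<longleftrightarrow> twins n leq x y"
proof -
  have "inj_on \<phi> (Xset n)"
    using assms(1) by (simp add: carrier_AutP Bij_def bij_betw_def)
  moreover have "down_set n leq z \<subseteq> Xset n" "up_set n leq z \<subseteq> Xset n" for z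
    by (auto simp: down_set_def up_set_def)
  ultimately show ?thesis
    using assms by (simp add: twins_def down_set_image up_set_image inj_on_image_eq_iff)
qed

lemma twin_pi_in_AutTwin:
  assumes \<phi>: "\<phi> \<in> carrier (AutP n leq)"
  shows "twin_pi n leq \<phi> \<in> carrier (AutTwin n leq)"
proof -
  have bij: "bij_betw \<phi> (Xset n) (Xset n)"
    using \<phi> by (simp add: carrier_AutP Bij_def)
  have "(\<phi> x, \<phi> y) \<in> twin_rel \<longleftrightarrow> (x, y) \<in> twin_rel" if "x \<in> Xset n" "y \<in> Xset n" for x y
    using that twins_image_iff[OF \<phi>] bij_betw_apply[OF bij] by (simp add: twin_rel_def)
  then have "bij_betw ((`) \<phi>) (twin_classes n leq) (twin_classes n leq)"
    unfolding twin_classes_eq_quotient by (rule bij_betw_image_quotient[OF equiv_twin_rel bij])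
  then have "twin_pi n leq \<phi> \<in> Bij (twin_classes n leq)"
    unfolding twin_pi_def by (rule restrict_in_Bij)
  moreover have "twin_le leq \<alpha> \<beta> \<longleftrightarrow> twin_le leq (\<phi> ` \<alpha>) (\<phi> ` \<beta>)"
    if "\<alpha> \<in> twin_classes n leq" "\<beta> \<in> twin_classes n leq" for \<alpha> \<beta>
    using that twin_class_subset \<phi> unfolding twin_le_def carrier_AutP by blast
  ultimately show ?thesis
    by (simp add: carrier_AutTwin twin_pi_def)
qed

lemma twin_pi_hom: "twin_pi n leq \<in> hom (AutP n leq) (AutTwin n leq)"
proof (rule homI)
  fix \<phi> \<chi> assume \<phi>\<chi>: "\<phi> \<in> carrier (AutP n leq)" "\<chi> \<in> carrier (AutP n leq)"
  have "\<chi> ` \<alpha> \<in> twin_classes n leq" if "\<alpha> \<in> twin_classes n leq" for \<alpha>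
    using twin_pi_in_AutTwin[OF \<phi>\<chi>(2)] that
    by (auto simp: carrier_AutTwin twin_pi_def Bij_def dest: bij_betw_apply)
  moreover have "compose (Xset n) \<phi> \<chi> ` \<alpha> = \<phi> ` \<chi> ` \<alpha>" if "\<alpha> \<in> twin_classes n leq" for \<alpha>
    using twin_class_subset[OF that] by (force simp: compose_def)
  ultimately have "twin_pi n leq (compose (Xset n) \<phi> \<chi>) =
      compose (twin_classes n leq) (twin_pi n leq \<phi>) (twin_pi n leq \<chi>)"
    by (simp add: twin_pi_def compose_def cong: restrict_cong)
  then show "twin_pi n leq (\<phi> \<otimes>\<^bsub>AutP n leq\<^esub> \<chi>) =
      twin_pi n leq \<phi> \<otimes>\<^bsub>AutTwin n leq\<^esub> twin_pi n leq \<chi>"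
    using \<phi>\<chi> twin_pi_in_AutTwin[OF \<phi>\<chi>(1)] twin_pi_in_AutTwin[OF \<phi>\<chi>(2)]
    by (simp add: AutP_def AutTwin_def mult_aut_group carrier_aut_group)
qed (rule twin_pi_in_AutTwin)


lemma in_AutP_if_maps_twin_classes:
  assumes \<phi>: "\<phi> \<in> Bij (Xset n)" and \<psi>: "\<psi> \<in> carrier (AutTwin n leq)"
    and maps: "\<And>\<alpha>. \<alpha> \<in> twin_classes n leq \<Longrightarrow> \<phi> ` \<alpha> = \<psi> \<alpha>"
  shows "\<phi> \<in> carrier (AutP n leq)"
proof -
  have inj_\<phi>: "inj_on \<phi> (Xset n)"
    using \<phi> by (simp add: Bij_def bij_betw_def)
  have \<psi>_bij: "bij_betw \<psi> (twin_classes n leq) (twin_classes n leq)"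
    and \<psi>_le: "\<And>\<alpha> \<beta>. \<alpha> \<in> twin_classes n leq \<Longrightarrow> \<beta> \<in> twin_classes n leq \<Longrightarrow>
                 twin_le leq \<alpha> \<beta> \<longleftrightarrow> twin_le leq (\<psi> \<alpha>) (\<psi> \<beta>)"
    using \<psi> by (simp_all add: carrier_AutTwin Bij_def)
  have "leq x y \<longleftrightarrow> leq (\<phi> x) (\<phi> y)" if xy: "x \<in> Xset n" "y \<in> Xset n" for x y
  proof -
    obtain \<alpha> \<beta> where \<alpha>\<beta>: "\<alpha> \<in> twin_classes n leq" "\<beta> \<in> twin_classes n leq" "x \<in> \<alpha>" "y \<in> \<beta>"
      using xy partition_onD1[OF partition_on_twin_classes] by blast
    have \<psi>\<alpha>\<beta>: "\<psi> \<alpha> \<in> twin_classes n leq" "\<psi> \<beta> \<in> twin_classes n leq"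
      using \<alpha>\<beta> bij_betw_apply[OF \<psi>_bij] by simp_all
    have img: "\<phi> x \<in> \<psi> \<alpha>" "\<phi> y \<in> \<psi> \<beta>"
      using maps \<alpha>\<beta> by blast+
    have "\<psi> \<alpha> = \<psi> \<beta> \<longleftrightarrow> \<alpha> = \<beta>"
      using \<alpha>\<beta> bij_betw_imp_inj_on[OF \<psi>_bij] by (auto dest: inj_onD)
    moreover have "\<phi> x = \<phi> y \<longleftrightarrow> x = y"
      using xy inj_\<phi> by (auto dest: inj_onD)
    ultimately show ?thesis
      using leq_iff_twin_le[OF \<alpha>\<beta>] leq_iff_twin_le[OF \<psi>\<alpha>\<beta> img] \<psi>_le[OF \<alpha>\<beta>(1,2)] by simp
  qed
  then show ?thesis
    using \<phi> by (simp add: carrier_AutP)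
qed

lemma kernel_twin_pi:
  "kernel (AutP n leq) (AutTwin n leq) (twin_pi n leq) =
     {\<sigma> \<in> Bij (Xset n). \<forall>\<alpha>\<in>twin_classes n leq. bij_betw \<sigma> \<alpha> \<alpha>}"
proof (intro equalityI subsetI)
  fix \<sigma> assume "\<sigma> \<in> kernel (AutP n leq) (AutTwin n leq) (twin_pi n leq)"
  then have \<sigma>: "\<sigma> \<in> carrier (AutP n leq)" and triv: "twin_pi n leq \<sigma> = (\<lambda>\<alpha>\<in>twin_classes n leq. \<alpha>)"
    by (simp_all add: kernel_def AutTwin_def one_aut_group)
  have "bij_betw \<sigma> \<alpha> \<alpha>" if \<alpha>: "\<alpha> \<in> twin_classes n leq" for \<alpha>
  proof -
    have "\<sigma> ` \<alpha> = \<alpha>"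
      using fun_cong[OF triv, of \<alpha>] \<alpha> by (simp add: twin_pi_def)
    moreover have "inj_on \<sigma> \<alpha>"
      using \<sigma> twin_class_subset[OF \<alpha>] by (auto simp: carrier_AutP Bij_def bij_betw_def intro: inj_on_subset)
    ultimately show ?thesis
      by (simp add: bij_betw_def)
  qed
  then show "\<sigma> \<in> {\<sigma> \<in> Bij (Xset n). \<forall>\<alpha>\<in>twin_classes n leq. bij_betw \<sigma> \<alpha> \<alpha>}"
    using \<sigma> by (simp add: carrier_AutP)
next
  fix \<sigma> assume \<sigma>: "\<sigma> \<in> {\<sigma> \<in> Bij (Xset n). \<forall>\<alpha>\<in>twin_classes n leq. bij_betw \<sigma> \<alpha> \<alpha>}"
  then have fix_classes: "\<sigma> ` \<alpha> = \<alpha>" if "\<alpha> \<in> twin_classes n leq" for \<alpha>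
    using that by (simp add: bij_betw_imp_surj_on)
  have "(\<lambda>\<alpha>\<in>twin_classes n leq. \<alpha>) \<in> carrier (AutTwin n leq)"
    by (simp add: carrier_AutTwin id_Bij)
  then have "\<sigma> \<in> carrier (AutP n leq)"
    by (rule in_AutP_if_maps_twin_classes[rotated]) (use \<sigma> fix_classes in simp_all)
  moreover have "twin_pi n leq \<sigma> = (\<lambda>\<alpha>\<in>twin_classes n leq. \<alpha>)"
    using fix_classes by (simp add: twin_pi_def cong: restrict_cong)
  ultimately show "\<sigma> \<in> kernel (AutP n leq) (AutTwin n leq) (twin_pi n leq)"
    by (simp add: kernel_def AutTwin_def one_aut_group)
qed

lemma kernel_twin_pi_iso_product_sym_group:
  "(AutP n leq)\<lparr>carrier := kernel (AutP n leq) (AutTwin n leq) (twin_pi n leq)\<rparr>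
     \<cong> product_group (twin_classes n leq) (\<lambda>\<alpha>. sym_group (card \<alpha>))"
proof -
  have "(AutP n leq)\<lparr>carrier := kernel (AutP n leq) (AutTwin n leq) (twin_pi n leq)\<rparr> =
      (BijGroup (Xset n))\<lparr>carrier := {\<sigma> \<in> Bij (Xset n). \<forall>\<alpha>\<in>twin_classes n leq. bij_betw \<sigma> \<alpha> \<alpha>}\<rparr>"
    unfolding kernel_twin_pi by (simp add: AutP_def aut_group_def)
  also have "\<dots> \<cong> product_group (twin_classes n leq) BijGroup"
    by (rule block_stabilizer_iso_product_group[OF partition_on_twin_classes])
  also have "\<dots> \<cong> product_group (twin_classes n leq) (\<lambda>\<alpha>. sym_group (card \<alpha>))"
    using group.iso_sym[OF sym_group_is_group sym_group_iso_BijGroup[OF finite_twin_class]]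
    by (intro iso_product_groupI) (simp_all add: group_BijGroup sym_group_is_group)
  finally show ?thesis .
qed

lemma twin_pi_surj_iff:
  "twin_pi n leq ` carrier (AutP n leq) = carrier (AutTwin n leq) \<longleftrightarrow>
     (\<forall>\<psi>\<in>carrier (AutTwin n leq). \<forall>\<alpha>\<in>twin_classes n leq. card (\<psi> \<alpha>) = card \<alpha>)"
proof
  assume surj: "twin_pi n leq ` carrier (AutP n leq) = carrier (AutTwin n leq)"
  show "\<forall>\<psi>\<in>carrier (AutTwin n leq). \<forall>\<alpha>\<in>twin_classes n leq. card (\<psi> \<alpha>) = card \<alpha>"
  proof (intro ballI)
    fix \<psi> \<alpha> assume \<psi>: "\<psi> \<in> carrier (AutTwin n leq)" and \<alpha>: "\<alpha> \<in> twin_classes n leq"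
    obtain \<phi> where \<phi>: "\<phi> \<in> carrier (AutP n leq)" and "\<psi> = twin_pi n leq \<phi>"
      using \<psi> surj by (metis imageE)
    then have "\<psi> \<alpha> = \<phi> ` \<alpha>"
      using \<alpha> by (simp add: twin_pi_def)
    moreover have "inj_on \<phi> \<alpha>"
      using \<phi> twin_class_subset[OF \<alpha>] by (auto simp: carrier_AutP Bij_def bij_betw_def intro: inj_on_subset)
    ultimately show "card (\<psi> \<alpha>) = card \<alpha>"
      by (simp add: card_image)
  qed
next
  assume card: "\<forall>\<psi>\<in>carrier (AutTwin n leq). \<forall>\<alpha>\<in>twin_classes n leq. card (\<psi> \<alpha>) = card \<alpha>"
  show "twin_pi n leq ` carrier (AutP n leq) = carrier (AutTwin n leq)"
  proof (intro equalityI subsetI)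
    fix \<psi> assume "\<psi> \<in> twin_pi n leq ` carrier (AutP n leq)"
    then show "\<psi> \<in> carrier (AutTwin n leq)"
      using twin_pi_in_AutTwin by blast
  next
    fix \<psi> assume \<psi>: "\<psi> \<in> carrier (AutTwin n leq)"
    then have \<psi>_bij: "bij_betw \<psi> (twin_classes n leq) (twin_classes n leq)"
      by (simp add: carrier_AutTwin Bij_def)
    have "\<exists>f. bij_betw f \<alpha> (\<psi> \<alpha>)" if \<alpha>: "\<alpha> \<in> twin_classes n leq" for \<alpha>
      using \<psi> \<alpha> card finite_twin_class bij_betw_apply[OF \<psi>_bij \<alpha>]
      by (intro finite_same_card_bij) simp_all
    then obtain f where f: "\<And>\<alpha>. \<alpha> \<in> twin_classes n leq \<Longrightarrow> bij_betw (f \<alpha>) \<alpha> (\<psi> \<alpha>)"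
      by metis
    define \<phi> where "\<phi> = glue_blocks (twin_classes n leq) f"
    have maps: "\<phi> ` \<alpha> = \<psi> \<alpha>" if \<alpha>: "\<alpha> \<in> twin_classes n leq" for \<alpha>
      using glue_blocks_bij_betw[where f = f, OF partition_onD2[OF partition_on_twin_classes] \<alpha> f[OF \<alpha>]]
      unfolding \<phi>_def by (rule bij_betw_imp_surj_on)
    have "\<phi> \<in> Bij (Xset n)"
      unfolding \<phi>_def using partition_on_twin_classes \<psi>_bij f by (rule glue_blocks_in_Bij)
    then have "\<phi> \<in> carrier (AutP n leq)"
      using \<psi> maps by (rule in_AutP_if_maps_twin_classes)
    moreover have "twin_pi n leq \<phi> = \<psi>"
      using \<psi> maps by (intro extensionalityI[of _ "twin_classes n leq"])
        (simp_all add: twin_pi_def carrier_AutTwin Bij_imp_extensional)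
    ultimately show "\<psi> \<in> twin_pi n leq ` carrier (AutP n leq)"
      by blast
  qed
qed

end

theorem proposition4p6:
  fixes n :: nat and leq :: "nat \<Rightarrow> nat \<Rightarrow> bool"
  assumes "nl_poset n leq"
  shows "twin_pi n leq \<in> hom (AutP n leq) (AutTwin n leq) \<and>
         kernel (AutP n leq) (AutTwin n leq) (twin_pi n leq) =
           {\<sigma> \<in> Bij (Xset n). \<forall>\<alpha>\<in>twin_classes n leq. bij_betw \<sigma> \<alpha> \<alpha>} \<and>
         (AutP n leq)\<lparr>carrier := kernel (AutP n leq) (AutTwin n leq) (twin_pi n leq)\<rparr>
           \<cong> product_group (twin_classes n leq) (\<lambda>\<alpha>. sym_group (card \<alpha>)) \<and>
         (twin_pi n leq ` carrier (AutP n leq) = carrier (AutTwin n leq) \<longleftrightarrow>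
           (\<forall>\<psi>\<in>carrier (AutTwin n leq). \<forall>\<alpha>\<in>twin_classes n leq. card (\<psi> \<alpha>) = card \<alpha>))"
proof -
  interpret refl_relation_on_Xset n leq
    using assms by unfold_locales (auto simp: nl_poset_def)
  show ?thesis
    using twin_pi_hom kernel_twin_pi kernel_twin_pi_iso_product_sym_group twin_pi_surj_iff
    by blast
qed

end
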